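(* For any $\varepsilon>0$ there exists a two-player extensive-form game $\Gamma$ such that $\Gamma$ has, up to realization equivalence, a unique CDT equilibrium, and such that for every CDT equilibrium $\pi$ of $\Gamma$, every CDT equilibrium $\pi'$ of $\mathrm{pr}_1(\Gamma)$, and both players $i\in\{1,2\}$, $U_i(\pi')/U_i(\pi)\le\varepsilon$. In particular, $\mathrm{VoR}^{\mathrm{SC}}(\Gamma)=0$ for every $\mathrm{SC}\in\{\mathrm{wCDT},\mathrm{bCDT},\mathrm{wEDT},\mathrm{bEDT},\mathrm{wNash},\mathrm{bNash}\}$.
   Context: An extensive-form game consists of a finite rooted tree (nodes $\mathcal H$, leaves $\mathcal Z$, actions $A_h$), players $\mathcal N$ plus chance, an assignment of nonterminal nodes to players or chance, chance distributions, utilities $u_i:\mathcal Z\to\mathbb R_{\ge0}$, and for each $i$ a partition $\mathcal I_i$ of its nodes into infosets with common action sets $A_I$. For a node $h$, $\mathrm{obs}_1(h)$ is the sequence of (infoset, action) pairs at Player 1's nodes on the root-to-$h$ path (excluding $h$). $\mathrm{pr}_1(\Gamma)$ has the same tree and utilities as $\Gamma$, with each $I\in\mathcal I_1$ partitioned into the classes of $h\sim h'\iff\mathrm{obs}_1(h)=\mathrm{obs}_1(h')$ (computed in $\Gamma$) and other players' infosets unchanged. A behavioral strategy $\pi_i$ assigns $\pi_i(\cdot\mid I)\in\Delta(A_I)$ to each $I\in\mathcal I_i$; $S_i$ is the set of these; $U_i(\pi)=\sum_z\mathbb P(z\mid\pi)u_i(z)$ with $\mathbb P(z\mid\pi)$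 the reach probability of $z$. Profiles are realization-equivalent if they induce the same reach probabilities at all nodes. $\pi_i^{I\mapsto\sigma}$ plays $\sigma$ at $I$ and as $\pi_i$ elsewhere. Nash equilibrium: each $\pi_i\in\arg\max_{\pi_i'}U_i(\pi_i',\pi_{-i})$. EDT equilibrium: for all $i$, $I\in\mathcal I_i$, $\pi_i(\cdot\mid I)\in\arg\max_{\sigma\in\Delta(A_I)}U_i(\pi_i^{I\mapsto\sigma},\pi_{-i})$. CDT equilibrium: each $\pi_i$ is a Karush–Kuhn–Tucker point of maximizing $U_i(\cdot,\pi_{-i})$ over $S_i=\prod_I\Delta(A_I)$. For X in {Nash, EDT, CDT}, $u_1(\mathrm{bX}(\Gamma))$ / $u_1(\mathrm{wX}(\Gamma))$ is the max / min of $U_1$ over X equilibria of $\Gamma$; $\mathrm{VoR}^{\mathrm{SC}}(\Gamma)=u_1(\mathrm{SC}(\mathrm{pr}_1(\Gamma)))/u_1(\mathrm{SC}(\Gamma))$. *)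

theory Defs
  imports "HOL-Analysis.Analysis"
begin

text \<open>Nodes are action histories (lists of actions, the root is the empty list).
Player 0 denotes chance; the players are 1, ..., num_players.
Infosets of player i are given as sets of nodes.\<close>

record 'a efg =
  nodes :: "'a list set"
  num_players :: nat
  turn :: "'a list \<Rightarrow> nat"
  chance :: "'a list \<Rightarrow> 'a \<Rightarrow> real"
  util :: "nat \<Rightarrow> 'a list \<Rightarrow> real"
  infosets :: "nat \<Rightarrow> 'a list set set"

definition players :: "'a efg \<Rightarrow> nat set" where
  "players G = {1..num_players G}"

definition acts :: "'a efg \<Rightarrow> 'a list \<Rightarrow> 'a set" where
  "acts G h = {a. h @ [a] \<in> nodes G}"

definition leaves :: "'a efg \<Rightarrow> 'a list set" where
  "leaves G = {h \<in> nodes G. acts G h = {}}"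

definition internal_nodes :: "'a efg \<Rightarrow> 'a list set" where
  "internal_nodes G = {h \<in> nodes G. acts G h \<noteq> {}}"

definition is_dist :: "'a set \<Rightarrow> ('a \<Rightarrow> real) \<Rightarrow> bool" where
  "is_dist A p \<longleftrightarrow> (\<forall>a. p a \<ge> 0) \<and> (\<forall>a. a \<notin> A \<longrightarrow> p a = 0) \<and> sum p A = 1"

definition actsI :: "'a efg \<Rightarrow> 'a list set \<Rightarrow> 'a set" where
  "actsI G I = acts G (SOME h. h \<in> I)"

definition wf_efg :: "'a efg \<Rightarrow> bool" where
  "wf_efg G \<longleftrightarrow>
     finite (nodes G) \<and> [] \<in> nodes G \<and>
     (\<forall>h a. h @ [a] \<in> nodes G \<longrightarrow> h \<in> nodes G) \<and>
     (\<forall>h \<in> internal_nodes G. turn G h = 0 \<or> turn G h \<in> players G) \<and>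
     (\<forall>h \<in> internal_nodes G. turn G h = 0 \<longrightarrow> is_dist (acts G h) (chance G h)) \<and>
     (\<forall>i \<in> players G. \<forall>z \<in> leaves G. util G i z \<ge> 0) \<and>
     (\<forall>i \<in> players G.
        (\<forall>I \<in> infosets G i. I \<noteq> {}) \<and>
        (\<forall>I \<in> infosets G i. \<forall>J \<in> infosets G i. I \<noteq> J \<longrightarrow> I \<inter> J = {}) \<and>
        \<Union>(infosets G i) = {h \<in> internal_nodes G. turn G h = i} \<and>
        (\<forall>I \<in> infosets G i. \<forall>h \<in> I. \<forall>h' \<in> I. acts G h = acts G h'))"

definition infoset_of :: "'a efg \<Rightarrow> nat \<Rightarrow> 'a list \<Rightarrow> 'a list set" where
  "infoset_of G i h = (THE I. I \<in> infosets G i \<and> h \<in> I)"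

type_synonym 'a bstrat = "'a list set \<Rightarrow> 'a \<Rightarrow> real"
type_synonym 'a profile = "nat \<Rightarrow> 'a bstrat"

definition strat :: "'a efg \<Rightarrow> nat \<Rightarrow> 'a bstrat \<Rightarrow> bool" where
  "strat G i s \<longleftrightarrow> (\<forall>I \<in> infosets G i. is_dist (actsI G I) (s I))"

definition profile :: "'a efg \<Rightarrow> 'a profile \<Rightarrow> bool" where
  "profile G \<pi> \<longleftrightarrow> (\<forall>i \<in> players G. strat G i (\<pi> i))"

definition step_prob :: "'a efg \<Rightarrow> 'a profile \<Rightarrow> 'a list \<Rightarrow> 'a \<Rightarrow> real" where
  "step_prob G \<pi> g a =
     (if turn G g = 0 then chance G g a
      else \<pi> (turn G g) (infoset_of G (turn G g) g) a)"

definition reach :: "'a efg \<Rightarrow> 'a profile \<Rightarrow> 'a list \<Rightarrow> real" where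
  "reach G \<pi> h = (\<Prod>k<length h. step_prob G \<pi> (take k h) (h ! k))"

definition U :: "'a efg \<Rightarrow> nat \<Rightarrow> 'a profile \<Rightarrow> real" where
  "U G i \<pi> = (\<Sum>z \<in> leaves G. reach G \<pi> z * util G i z)"

definition real_equiv :: "'a efg \<Rightarrow> 'a profile \<Rightarrow> 'a profile \<Rightarrow> bool" where
  "real_equiv G \<pi> \<pi>' \<longleftrightarrow> (\<forall>h \<in> nodes G. reach G \<pi> h = reach G \<pi>' h)"

definition nash_eq :: "'a efg \<Rightarrow> 'a profile \<Rightarrow> bool" where
  "nash_eq G \<pi> \<longleftrightarrow> profile G \<pi> \<and>
     (\<forall>i \<in> players G. \<forall>s. strat G i s \<longrightarrow> U G i (\<pi>(i := s)) \<le> U G i \<pi>)"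

definition edt_eq :: "'a efg \<Rightarrow> 'a profile \<Rightarrow> bool" where
  "edt_eq G \<pi> \<longleftrightarrow> profile G \<pi> \<and>
     (\<forall>i \<in> players G. \<forall>I \<in> infosets G i. \<forall>d. is_dist (actsI G I) d \<longrightarrow>
        U G i (\<pi>(i := (\<pi> i)(I := d))) \<le> U G i \<pi>)"

definition dU :: "'a efg \<Rightarrow> nat \<Rightarrow> 'a profile \<Rightarrow> 'a list set \<Rightarrow> 'a \<Rightarrow> real" where
  "dU G i \<pi> I a = deriv (\<lambda>t. U G i (\<pi>(i := (\<pi> i)(I := (\<pi> i I)(a := t))))) (\<pi> i I a)"

text \<open>KKT point of maximizing U_i(., pi_{-i}) over the product of simplices:
constraints -x_{I,a} <= 0 (multipliers mu) and sum_a x_{I,a} - 1 = 0 (multiplier lambda).\<close>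
definition kkt_point :: "'a efg \<Rightarrow> nat \<Rightarrow> 'a profile \<Rightarrow> bool" where
  "kkt_point G i \<pi> \<longleftrightarrow> strat G i (\<pi> i) \<and>
     (\<forall>I \<in> infosets G i. \<exists>lam::real. \<exists>\<mu>::'a \<Rightarrow> real. \<forall>a \<in> actsI G I.
        \<mu> a \<ge> 0 \<and> \<mu> a * \<pi> i I a = 0 \<and> dU G i \<pi> I a = lam - \<mu> a)"

definition cdt_eq :: "'a efg \<Rightarrow> 'a profile \<Rightarrow> bool" where
  "cdt_eq G \<pi> \<longleftrightarrow> profile G \<pi> \<and> (\<forall>i \<in> players G. kkt_point G i \<pi>)"

definition obs1 :: "'a efg \<Rightarrow> 'a list \<Rightarrow> ('a list set \<times> 'a) list" where
  "obs1 G h = map (\<lambda>k. (infoset_of G 1 (take k h), h ! k))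
                  (filter (\<lambda>k. turn G (take k h) = 1) [0..<length h])"

definition pr1 :: "'a efg \<Rightarrow> 'a efg" where
  "pr1 G = G\<lparr> infosets := (infosets G)(1 :=
      (\<Union>I \<in> infosets G 1. {{h' \<in> I. obs1 G h' = obs1 G h} | h. h \<in> I})) \<rparr>"

definition best_val :: "('a efg \<Rightarrow> 'a profile \<Rightarrow> bool) \<Rightarrow> 'a efg \<Rightarrow> real" where
  "best_val X G = Sup {U G 1 \<pi> | \<pi>. X G \<pi>}"

definition worst_val :: "('a efg \<Rightarrow> 'a profile \<Rightarrow> bool) \<Rightarrow> 'a efg \<Rightarrow> real" where
  "worst_val X G = Inf {U G 1 \<pi> | \<pi>. X G \<pi>}"

definition VoR_best :: "('a efg \<Rightarrow> 'a profile \<Rightarrow> bool) \<Rightarrow> 'a efg \<Rightarrow> real" where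
  "VoR_best X G = best_val X (pr1 G) / best_val X G"

definition VoR_worst :: "('a efg \<Rightarrow> 'a profile \<Rightarrow> bool) \<Rightarrow> 'a efg \<Rightarrow> real" where
  "VoR_worst X G = worst_val X (pr1 G) / worst_val X G"

end

theory Submission
  imports Defs
begin

(*
  Chance picks c \<in> {0, 1}; player 1 makes a dummy move (so that her observation history
  records c); player 2, ignorant of c, opts out (both get d) or continues; then player 1 plays
  a \<in> {0, 1}.  Player 1 earns 2 for (c, a) = (0, 0) and 1 for (1, 1); player 2 earns 1 exactly
  in the other two outcomes.  Forgetting c, player 1's partial derivatives favour a = 0
  (1 against 1/2), so continuing is worth 1/2 > d to player 2: the unique equilibrium pays
  (1, 1/2).  Remembering c, player 1 matches it, continuing is worth 0 < d to player 2, and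
  every equilibrium pays (d, d).  Both arguments use only that an action whose partial
  derivative is strictly dominated at its infoset is never played.  CDT equilibria have this
  property by the KKT conditions; since utilities here are affine in each infoset's variables,
  EDT (hence Nash) equilibria are CDT equilibria, so the same values arise for all three notions.
*)

lemma infoset_of_eqI:
  assumes "I \<in> infosets G i" "h \<in> I" "\<And>J. J \<in> infosets G i \<Longrightarrow> h \<in> J \<Longrightarrow> J = I"
  shows "infoset_of G i h = I"
  unfolding infoset_of_def using assms by (intro the_equality) blast+

lemma actsI_eqI:
  assumes "I \<noteq> {}" "\<And>h. h \<in> I \<Longrightarrow> acts G h = A"
  shows "actsI G I = A"
  unfolding actsI_def using assms by (metis some_in_eq)

lemma is_dist_finite_nonempty: "is_dist A p \<Longrightarrow> finite A \<and> A \<noteq> {}"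
  unfolding is_dist_def by (metis sum.empty sum.infinite zero_neq_one)

lemma deriv_affine:
  assumes "\<And>t. f t = f 0 + B * t"
  shows "deriv f x = B"
proof -
  have "f = (\<lambda>t. f 0 + B * t)" using assms by (rule ext)
  moreover have "((\<lambda>t. f 0 + B * t) has_field_derivative B) (at x)"
    by (auto intro!: derivative_eq_intros)
  ultimately show ?thesis by (metis DERIV_imp_deriv)
qed

lemma is_dist_singleton: "is_dist {a} p \<Longrightarrow> p a = 1"
  by (simp add: is_dist_def)

lemma is_dist_pair: "is_dist {a, b} p \<Longrightarrow> a \<noteq> b \<Longrightarrow> p a + p b = 1 \<and> p a \<ge> 0 \<and> p b \<ge> 0"
  by (simp add: is_dist_def)

lemma reach_explicit:
  "reach G \<pi> [] = 1"
  "reach G \<pi> [a] = step_prob G \<pi> [] a"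
  "reach G \<pi> [a, b] = step_prob G \<pi> [] a * step_prob G \<pi> [a] b"
  "reach G \<pi> [a, b, c] = step_prob G \<pi> [] a * step_prob G \<pi> [a] b * step_prob G \<pi> [a, b] c"
  "reach G \<pi> [a, b, c, e] =
     step_prob G \<pi> [] a * step_prob G \<pi> [a] b * step_prob G \<pi> [a, b] c * step_prob G \<pi> [a, b, c] e"
  by (simp_all add: reach_def lessThan_Suc eval_nat_numeral)

lemma nash_imp_edt: "nash_eq G \<pi> \<Longrightarrow> edt_eq G \<pi>"
  unfolding nash_eq_def edt_eq_def profile_def strat_def by auto

text \<open>This holds whenever no play passes through \<open>I\<close> twice; it is what makes EDT optimality at
  \<open>I\<close> a local condition on the gradient \<open>dU\<close>.\<close>
definition affine_in_infoset :: "'a efg \<Rightarrow> nat \<Rightarrow> 'a profile \<Rightarrow> 'a list set \<Rightarrow> bool" where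
  "affine_in_infoset G i \<pi> I \<longleftrightarrow> (\<forall>\<sigma>.
     U G i (\<pi>(i := (\<pi> i)(I := \<sigma>))) =
     U G i (\<pi>(i := (\<pi> i)(I := (\<lambda>_. 0)))) + (\<Sum>a\<in>actsI G I. \<sigma> a * dU G i \<pi> I a))"

lemma kkt_dominated_unplayed:
  assumes "kkt_point G i \<pi>" "I \<in> infosets G i" "a \<in> actsI G I" "b \<in> actsI G I"
    and "dU G i \<pi> I a < dU G i \<pi> I b"
  shows "\<pi> i I a = 0"
proof -
  obtain lam \<mu> where "\<forall>c \<in> actsI G I. \<mu> c \<ge> 0 \<and> \<mu> c * \<pi> i I c = 0 \<and> dU G i \<pi> I c = lam - \<mu> c"
    using assms(1,2) unfolding kkt_point_def by blast
  with assms(3-5) have "\<mu> a > 0" "\<mu> a * \<pi> i I a = 0" by force+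
  then show ?thesis by simp
qed

lemma edt_dominated_unplayed:
  assumes edt: "edt_eq G \<pi>" and i: "i \<in> players G" and I: "I \<in> infosets G i"
    and aff: "affine_in_infoset G i \<pi> I"
    and ab: "a \<in> actsI G I" "b \<in> actsI G I" and less: "dU G i \<pi> I a < dU G i \<pi> I b"
  shows "\<pi> i I a = 0"
proof -
  let ?A = "actsI G I" and ?p = "\<pi> i I" and ?D = "dU G i \<pi> I"
  have p: "is_dist ?A ?p" using edt i I by (auto simp: edt_eq_def profile_def strat_def)
  then have fin: "finite ?A" by (simp add: is_dist_finite_nonempty)
  have "a \<noteq> b" using less by auto
  define \<sigma> where "\<sigma> = ?p(a := 0, b := ?p b + ?p a)"
  have shift:
    "\<sigma> c * f c = ?p c * f c + (if c = b then ?p a * f b else 0) - (if c = a then ?p a * f a else 0)"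
    for c f using \<open>a \<noteq> b\<close> by (simp add: \<sigma>_def algebra_simps)
  have sum_shift: "(\<Sum>c\<in>?A. \<sigma> c * f c) = (\<Sum>c\<in>?A. ?p c * f c) + ?p a * (f b - f a)" for f
    using ab fin by (simp add: shift sum.distrib sum_subtractf right_diff_distrib)
  have "is_dist ?A \<sigma>"
    unfolding is_dist_def
  proof (intro conjI allI impI)
    show "\<sigma> c \<ge> 0" for c using p by (simp add: \<sigma>_def is_dist_def)
    show "\<sigma> c = 0" if "c \<notin> ?A" for c using p ab that by (auto simp: \<sigma>_def is_dist_def)
    show "sum \<sigma> ?A = 1" using p sum_shift[of "\<lambda>_. 1"] by (simp add: is_dist_def)
  qed
  then have "U G i (\<pi>(i := (\<pi> i)(I := \<sigma>))) \<le> U G i (\<pi>(i := (\<pi> i)(I := ?p)))"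
    using edt i I by (simp add: edt_eq_def)
  moreover obtain C where expand: "\<And>\<tau>. U G i (\<pi>(i := (\<pi> i)(I := \<tau>))) = C + (\<Sum>c\<in>?A. \<tau> c * ?D c)"
    using aff unfolding affine_in_infoset_def by blast
  ultimately have "(\<Sum>c\<in>?A. \<sigma> c * ?D c) \<le> (\<Sum>c\<in>?A. ?p c * ?D c)"
    using expand[of ?p] by simp
  then have "?p a * (?D b - ?D a) \<le> 0" by (simp add: sum_shift)
  moreover have "?p a \<ge> 0" using p by (simp add: is_dist_def)
  ultimately show ?thesis using less by (simp add: mult_le_0_iff)
qed

lemma edt_imp_kkt_point:
  assumes edt: "edt_eq G \<pi>" and i: "i \<in> players G"
    and aff: "\<And>I. I \<in> infosets G i \<Longrightarrow> affine_in_infoset G i \<pi> I"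
  shows "kkt_point G i \<pi>"
  unfolding kkt_point_def
proof (intro conjI ballI)
  show s: "strat G i (\<pi> i)" using edt i by (simp add: edt_eq_def profile_def)
  fix I assume I: "I \<in> infosets G i"
  let ?A = "actsI G I" and ?D = "dU G i \<pi> I"
  define lam where "lam = Max (?D ` ?A)"
  have A: "finite ?A" "?A \<noteq> {}" using s I is_dist_finite_nonempty by (auto simp: strat_def)
  have "lam - ?D a \<ge> 0 \<and> (lam - ?D a) * \<pi> i I a = 0" if a: "a \<in> ?A" for a
  proof -
    have "?D a \<le> lam" using a A by (simp add: lam_def)
    moreover have "\<pi> i I a = 0" if "?D a < lam"
    proof -
      have "lam \<in> ?D ` ?A" using A by (simp add: lam_def)
      then obtain b where "b \<in> ?A" "lam = ?D b" by blast
      then show ?thesis using edt_dominated_unplayed[OF edt i I aff[OF I] a] that by simp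
    qed
    ultimately show ?thesis by fastforce
  qed
  then show "\<exists>lam \<mu>. \<forall>a\<in>?A. 0 \<le> \<mu> a \<and> \<mu> a * \<pi> i I a = 0 \<and> ?D a = lam - \<mu> a"
    by (intro exI[of _ lam] exI[of _ "\<lambda>a. lam - ?D a"]) simp
qed

lemma edt_imp_cdt:
  assumes "edt_eq G \<pi>"
    and "\<And>i I. i \<in> players G \<Longrightarrow> I \<in> infosets G i \<Longrightarrow> affine_in_infoset G i \<pi> I"
  shows "cdt_eq G \<pi>"
  using assms edt_imp_kkt_point[OF assms(1)] by (simp add: cdt_eq_def edt_eq_def)

lemma VoR_of_unique_values:
  assumes "\<And>\<pi>. X G \<pi> \<Longrightarrow> U G 1 \<pi> = u" "X G \<pi>\<^sub>0"
    and "\<And>\<pi>. X (pr1 G) \<pi> \<Longrightarrow> U (pr1 G) 1 \<pi> = v" "X (pr1 G) \<pi>\<^sub>1"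
  shows "VoR_worst X G = v / u" "VoR_best X G = v / u"
proof -
  have "{U G 1 \<pi> | \<pi>. X G \<pi>} = {u}" "{U (pr1 G) 1 \<pi> | \<pi>. X (pr1 G) \<pi>} = {v}"
    using assms by blast+
  then show "VoR_worst X G = v / u" "VoR_best X G = v / u"
    by (simp_all add: VoR_worst_def VoR_best_def worst_val_def best_val_def)
qed

declare One_nat_def [simp del]

text \<open>A history lists the coin \<open>c\<close>, player 1's dummy move \<open>0\<close>, player 2's choice
  (\<open>0\<close> = opt out), and player 1's final action.\<close>
definition game_nodes :: "nat list set" where
  "game_nodes = {[], [0], [1], [0,0], [1,0], [0,0,0], [1,0,0], [0,0,1], [1,0,1],
                 [0,0,1,0], [0,0,1,1], [1,0,1,0], [1,0,1,1]}"

definition game_turn :: "nat list \<Rightarrow> nat" where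
  "game_turn h = (if h = [] then 0 else if length h = 2 then 2 else 1)"

definition fair_coin :: "nat list \<Rightarrow> nat \<Rightarrow> real" where
  "fair_coin h a = (if a \<le> 1 then 1/2 else 0)"

definition game_util :: "real \<Rightarrow> nat \<Rightarrow> nat list \<Rightarrow> real" where
  "game_util d i z =
     (if z = [0,0,0] \<or> z = [1,0,0] then d
      else if i = 1 then (if z = [0,0,1,0] then 2 else if z = [1,0,1,1] then 1 else 0)
      else (if z = [0,0,1,1] \<or> z = [1,0,1,0] then 1 else 0))"

abbreviation "X0 \<equiv> {[0::nat]}"
abbreviation "X1 \<equiv> {[1::nat]}"
abbreviation "P2 \<equiv> {[0::nat,0], [1,0]}"
abbreviation "Y \<equiv> {[0::nat,0,1], [1,0,1]}"
abbreviation "Y0 \<equiv> {[0::nat,0,1]}"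
abbreviation "Y1 \<equiv> {[1::nat,0,1]}"

definition forgetful_infosets :: "nat \<Rightarrow> nat list set set" where
  "forgetful_infosets i = (if i = 1 then {X0, X1, Y} else if i = 2 then {P2} else {})"

definition recall_infosets :: "nat \<Rightarrow> nat list set set" where
  "recall_infosets i = (if i = 1 then {X0, X1, Y0, Y1} else if i = 2 then {P2} else {})"

definition game :: "real \<Rightarrow> (nat \<Rightarrow> nat list set set) \<Rightarrow> nat efg" where
  "game d Is = \<lparr>nodes = game_nodes, num_players = 2, turn = game_turn, chance = fair_coin,
                util = game_util d, infosets = Is\<rparr>"

abbreviation "forgetful_game d \<equiv> game d forgetful_infosets"
abbreviation "recall_game d \<equiv> game d recall_infosets"

lemma game_simps [simp]:
  "nodes (game d Is) = game_nodes" "num_players (game d Is) = 2" "turn (game d Is) = game_turn"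
  "chance (game d Is) = fair_coin" "util (game d Is) = game_util d" "infosets (game d Is) = Is"
  "players (game d Is) = {1, 2}"
  by (auto simp: game_def players_def)

lemma game_turn_simps [simp]:
  "game_turn [] = 0" "game_turn [a] = 1" "game_turn [a, b] = 2" "game_turn [a, b, c] = 1"
  by (simp_all add: game_turn_def)

lemma acts_game:
  "acts (game d Is) [] = {0, 1}" "acts (game d Is) [0] = {0}" "acts (game d Is) [1] = {0}"
  "acts (game d Is) [0, 0] = {0, 1}" "acts (game d Is) [1, 0] = {0, 1}"
  "acts (game d Is) [0, 0, 1] = {0, 1}" "acts (game d Is) [1, 0, 1] = {0, 1}"
  "acts (game d Is) [0, 0, 0] = {}" "acts (game d Is) [1, 0, 0] = {}"
  "acts (game d Is) [0, 0, 1, 0] = {}" "acts (game d Is) [0, 0, 1, 1] = {}"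
  "acts (game d Is) [1, 0, 1, 0] = {}" "acts (game d Is) [1, 0, 1, 1] = {}"
  by (auto simp: acts_def game_nodes_def)

lemma leaves_game:
  "leaves (game d Is) = {[0,0,0], [1,0,0], [0,0,1,0], [0,0,1,1], [1,0,1,0], [1,0,1,1]}"
  unfolding leaves_def by (auto simp: game_nodes_def acts_game)

lemma internal_nodes_game:
  "internal_nodes (game d Is) = {[], [0], [1], [0,0], [1,0], [0,0,1], [1,0,1]}"
  unfolding internal_nodes_def by (auto simp: game_nodes_def acts_game)

lemma wf_game:
  assumes "d \<ge> 0" and "Is \<in> {forgetful_infosets, recall_infosets}"
  shows "wf_efg (game d Is)"
  using assms unfolding wf_efg_def internal_nodes_game leaves_game
  by (auto simp: game_nodes_def acts_game forgetful_infosets_def recall_infosets_def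
      is_dist_def fair_coin_def game_util_def game_turn_def)

lemma infoset_of_forgetful [simp]:
  "infoset_of (forgetful_game d) 1 [0] = X0"
  "infoset_of (forgetful_game d) 1 [1] = X1"
  "infoset_of (forgetful_game d) 1 [0, 0, 1] = Y"
  "infoset_of (forgetful_game d) 1 [1, 0, 1] = Y"
  "infoset_of (forgetful_game d) 2 [0, 0] = P2"
  "infoset_of (forgetful_game d) 2 [1, 0] = P2"
  by (rule infoset_of_eqI; auto simp: forgetful_infosets_def)+

lemma infoset_of_recall [simp]:
  "infoset_of (recall_game d) 1 [0] = X0"
  "infoset_of (recall_game d) 1 [1] = X1"
  "infoset_of (recall_game d) 1 [0, 0, 1] = Y0"
  "infoset_of (recall_game d) 1 [1, 0, 1] = Y1"
  "infoset_of (recall_game d) 2 [0, 0] = P2"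
  "infoset_of (recall_game d) 2 [1, 0] = P2"
  by (rule infoset_of_eqI; auto simp: recall_infosets_def)+

lemma actsI_game:
  "actsI (game d Is) X0 = {0}" "actsI (game d Is) X1 = {0}" "actsI (game d Is) P2 = {0, 1}"
  "actsI (game d Is) Y = {0, 1}" "actsI (game d Is) Y0 = {0, 1}" "actsI (game d Is) Y1 = {0, 1}"
  by (rule actsI_eqI; auto simp: acts_game)+

lemma pr1_forgetful_game: "pr1 (forgetful_game d) = recall_game d"
proof -
  let ?G = "forgetful_game d"
  let ?cell = "\<lambda>I h. {h' \<in> I. obs1 ?G h' = obs1 ?G h}"
  have obs1: "obs1 ?G [0, 0, 1] = [(X0, 0)]" "obs1 ?G [1, 0, 1] = [(X1, 0)]"
    by (simp_all add: obs1_def upt_rec)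
  have Y_cells: "?cell Y [0, 0, 1] = Y0" "?cell Y [1, 0, 1] = Y1" by (auto simp: obs1)
  have "{?cell Y h | h. h \<in> Y} = {Y0, Y1}"
    unfolding setcompr_eq_image Collect_mem_eq image_insert image_empty Y_cells ..
  moreover have "{?cell X0 h | h. h \<in> X0} = {X0}" "{?cell X1 h | h. h \<in> X1} = {X1}"
    by auto
  moreover have "forgetful_infosets 1 = {X0, X1, Y}" by (simp add: forgetful_infosets_def)
  ultimately have "(\<Union>I \<in> forgetful_infosets 1. {?cell I h | h. h \<in> I}) = {X0, X1, Y0, Y1}"
    by (simp only: UN_insert UN_empty) auto
  also have "\<dots> = recall_infosets 1" by (simp add: recall_infosets_def)
  finally have cells: "(\<Union>I \<in> forgetful_infosets 1. {?cell I h | h. h \<in> I}) = recall_infosets 1" .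
  have "pr1 ?G = ?G\<lparr>infosets := forgetful_infosets(1 := recall_infosets 1)\<rparr>"
    unfolding pr1_def game_simps cells ..
  also have "forgetful_infosets(1 := recall_infosets 1) = recall_infosets"
    by (rule ext) (simp add: forgetful_infosets_def recall_infosets_def)
  finally show ?thesis by (simp add: game_def)
qed

lemma game_util_opt_out: "game_util d i [0, 0, 0] = d" "game_util d i [1, 0, 0] = d"
  by (simp_all add: game_util_def)

lemma U_game:
  "U (game d Is) i \<pi> =
     (\<Sum>c\<in>{0, 1}. 1/2 * \<pi> 1 (infoset_of (game d Is) 1 [c]) 0 *
        (\<pi> 2 (infoset_of (game d Is) 2 [c, 0]) 0 * d +
         \<pi> 2 (infoset_of (game d Is) 2 [c, 0]) 1 *
           (\<Sum>a\<in>{0, 1}. \<pi> 1 (infoset_of (game d Is) 1 [c, 0, 1]) a * game_util d i [c, 0, 1, a])))"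
  unfolding U_def leaves_game
  by (simp add: reach_explicit step_prob_def fair_coin_def game_util_opt_out field_simps)

lemma U_forgetful_game:
  "U (forgetful_game d) 1 \<pi> =
     1/2 * \<pi> 1 X0 0 * (\<pi> 2 P2 0 * d + \<pi> 2 P2 1 * (2 * \<pi> 1 Y 0)) +
     1/2 * \<pi> 1 X1 0 * (\<pi> 2 P2 0 * d + \<pi> 2 P2 1 * \<pi> 1 Y 1)"
  "U (forgetful_game d) 2 \<pi> =
     1/2 * \<pi> 1 X0 0 * (\<pi> 2 P2 0 * d + \<pi> 2 P2 1 * \<pi> 1 Y 1) +
     1/2 * \<pi> 1 X1 0 * (\<pi> 2 P2 0 * d + \<pi> 2 P2 1 * \<pi> 1 Y 0)"
  by (simp_all add: U_game game_util_def)

lemma U_recall_game: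
  "U (recall_game d) 1 \<pi> =
     1/2 * \<pi> 1 X0 0 * (\<pi> 2 P2 0 * d + \<pi> 2 P2 1 * (2 * \<pi> 1 Y0 0)) +
     1/2 * \<pi> 1 X1 0 * (\<pi> 2 P2 0 * d + \<pi> 2 P2 1 * \<pi> 1 Y1 1)"
  "U (recall_game d) 2 \<pi> =
     1/2 * \<pi> 1 X0 0 * (\<pi> 2 P2 0 * d + \<pi> 2 P2 1 * \<pi> 1 Y0 1) +
     1/2 * \<pi> 1 X1 0 * (\<pi> 2 P2 0 * d + \<pi> 2 P2 1 * \<pi> 1 Y1 0)"
  by (simp_all add: U_game game_util_def)

lemma dU_forgetful_game:
  "dU (forgetful_game d) 1 \<pi> X0 0 = 1/2 * (\<pi> 2 P2 0 * d + \<pi> 2 P2 1 * (2 * \<pi> 1 Y 0))"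
  "dU (forgetful_game d) 1 \<pi> X1 0 = 1/2 * (\<pi> 2 P2 0 * d + \<pi> 2 P2 1 * \<pi> 1 Y 1)"
  "dU (forgetful_game d) 1 \<pi> Y 0 = \<pi> 1 X0 0 * \<pi> 2 P2 1"
  "dU (forgetful_game d) 1 \<pi> Y 1 = 1/2 * \<pi> 1 X1 0 * \<pi> 2 P2 1"
  "dU (forgetful_game d) 2 \<pi> P2 0 = 1/2 * (\<pi> 1 X0 0 + \<pi> 1 X1 0) * d"
  "dU (forgetful_game d) 2 \<pi> P2 1 = 1/2 * (\<pi> 1 X0 0 * \<pi> 1 Y 1 + \<pi> 1 X1 0 * \<pi> 1 Y 0)"
  unfolding dU_def U_forgetful_game by (rule deriv_affine; simp add: algebra_simps)+

lemma dU_recall_game: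
  "dU (recall_game d) 1 \<pi> X0 0 = 1/2 * (\<pi> 2 P2 0 * d + \<pi> 2 P2 1 * (2 * \<pi> 1 Y0 0))"
  "dU (recall_game d) 1 \<pi> X1 0 = 1/2 * (\<pi> 2 P2 0 * d + \<pi> 2 P2 1 * \<pi> 1 Y1 1)"
  "dU (recall_game d) 1 \<pi> Y0 0 = \<pi> 1 X0 0 * \<pi> 2 P2 1"
  "dU (recall_game d) 1 \<pi> Y0 1 = 0"
  "dU (recall_game d) 1 \<pi> Y1 0 = 0"
  "dU (recall_game d) 1 \<pi> Y1 1 = 1/2 * \<pi> 1 X1 0 * \<pi> 2 P2 1"
  "dU (recall_game d) 2 \<pi> P2 0 = 1/2 * (\<pi> 1 X0 0 + \<pi> 1 X1 0) * d"
  "dU (recall_game d) 2 \<pi> P2 1 = 1/2 * (\<pi> 1 X0 0 * \<pi> 1 Y0 1 + \<pi> 1 X1 0 * \<pi> 1 Y1 0)"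
  unfolding dU_def U_recall_game by (rule deriv_affine; simp add: algebra_simps)+

lemma affine_in_infoset_forgetful_game:
  "I \<in> forgetful_infosets i \<Longrightarrow> affine_in_infoset (forgetful_game d) i \<pi> I"
  by (auto simp: forgetful_infosets_def affine_in_infoset_def U_forgetful_game dU_forgetful_game
      actsI_game algebra_simps split: if_splits)

lemma affine_in_infoset_recall_game:
  "I \<in> recall_infosets i \<Longrightarrow> affine_in_infoset (recall_game d) i \<pi> I"
  by (auto simp: recall_infosets_def affine_in_infoset_def U_recall_game dU_recall_game
      actsI_game algebra_simps split: if_splits)

lemma profile_forgetful_game:
  "profile (forgetful_game d) \<pi> \<longleftrightarrow>
     is_dist {0} (\<pi> 1 X0) \<and> is_dist {0} (\<pi> 1 X1) \<and> is_dist {0, 1} (\<pi> 1 Y) \<and> is_dist {0, 1} (\<pi> 2 P2)"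
  by (simp add: profile_def strat_def forgetful_infosets_def actsI_game)

lemma profile_recall_game:
  "profile (recall_game d) \<pi> \<longleftrightarrow>
     is_dist {0} (\<pi> 1 X0) \<and> is_dist {0} (\<pi> 1 X1) \<and> is_dist {0, 1} (\<pi> 1 Y0) \<and>
     is_dist {0, 1} (\<pi> 1 Y1) \<and> is_dist {0, 1} (\<pi> 2 P2)"
  by (simp add: profile_def strat_def recall_infosets_def actsI_game)

lemma cdt_eq_forgetful_game:
  assumes cdt: "cdt_eq (forgetful_game d) \<pi>" and "d < 1/2"
  shows "\<pi> 1 X0 0 = 1" "\<pi> 1 X1 0 = 1" "\<pi> 2 P2 0 = 0" "\<pi> 2 P2 1 = 1" "\<pi> 1 Y 0 = 1" "\<pi> 1 Y 1 = 0"
proof -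
  have dists: "is_dist {0} (\<pi> 1 X0)" "is_dist {0} (\<pi> 1 X1)" "is_dist {0, 1} (\<pi> 1 Y)" "is_dist {0, 1} (\<pi> 2 P2)"
    using cdt by (simp_all add: cdt_eq_def profile_forgetful_game)
  show x: "\<pi> 1 X0 0 = 1" "\<pi> 1 X1 0 = 1" using dists(1,2) by (simp_all add: is_dist_singleton)
  have kkt: "kkt_point (forgetful_game d) 1 \<pi>" "kkt_point (forgetful_game d) 2 \<pi>"
    using cdt by (simp_all add: cdt_eq_def)
  have y: "\<pi> 1 Y 0 + \<pi> 1 Y 1 = 1" and p: "\<pi> 2 P2 0 + \<pi> 2 P2 1 = 1"
    using is_dist_pair[OF dists(3)] is_dist_pair[OF dists(4)] by simp_all
  have "dU (forgetful_game d) 2 \<pi> P2 0 < dU (forgetful_game d) 2 \<pi> P2 1"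
    using x y \<open>d < 1/2\<close> by (simp add: dU_forgetful_game algebra_simps)
  then show p0: "\<pi> 2 P2 0 = 0"
    using kkt_dominated_unplayed[OF kkt(2), of P2 0 1] by (simp add: forgetful_infosets_def actsI_game)
  then show p1: "\<pi> 2 P2 1 = 1" using p by simp
  have "dU (forgetful_game d) 1 \<pi> Y 1 < dU (forgetful_game d) 1 \<pi> Y 0"
    using x p1 by (simp add: dU_forgetful_game)
  then show "\<pi> 1 Y 1 = 0"
    using kkt_dominated_unplayed[OF kkt(1), of Y 1 0] by (simp add: forgetful_infosets_def actsI_game)
  then show "\<pi> 1 Y 0 = 1" using y by simp
qed

lemma cdt_eq_recall_game:
  assumes cdt: "cdt_eq (recall_game d) \<pi>" and "d > 0"
  shows "\<pi> 1 X0 0 = 1" "\<pi> 1 X1 0 = 1" "\<pi> 2 P2 0 = 1" "\<pi> 2 P2 1 = 0"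
proof -
  have dists: "is_dist {0} (\<pi> 1 X0)" "is_dist {0} (\<pi> 1 X1)" "is_dist {0, 1} (\<pi> 2 P2)"
    using cdt by (simp_all add: cdt_eq_def profile_recall_game)
  show x: "\<pi> 1 X0 0 = 1" "\<pi> 1 X1 0 = 1" using dists(1,2) by (simp_all add: is_dist_singleton)
  have kkt: "kkt_point (recall_game d) 1 \<pi>" "kkt_point (recall_game d) 2 \<pi>"
    using cdt by (simp_all add: cdt_eq_def)
  have p: "\<pi> 2 P2 0 + \<pi> 2 P2 1 = 1" "\<pi> 2 P2 1 \<ge> 0" using is_dist_pair[OF dists(3)] by simp_all
  show p1: "\<pi> 2 P2 1 = 0"
  proof (rule ccontr)
    assume "\<pi> 2 P2 1 \<noteq> 0"
    with p(2) have pos: "\<pi> 2 P2 1 > 0" by simp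
    have "dU (recall_game d) 1 \<pi> Y0 1 < dU (recall_game d) 1 \<pi> Y0 0"
      using x pos by (simp add: dU_recall_game)
    then have "\<pi> 1 Y0 1 = 0"
      using kkt_dominated_unplayed[OF kkt(1), of Y0 1 0] by (simp add: recall_infosets_def actsI_game)
    moreover have "dU (recall_game d) 1 \<pi> Y1 0 < dU (recall_game d) 1 \<pi> Y1 1"
      using x pos by (simp add: dU_recall_game)
    then have "\<pi> 1 Y1 0 = 0"
      using kkt_dominated_unplayed[OF kkt(1), of Y1 0 1] by (simp add: recall_infosets_def actsI_game)
    ultimately have "dU (recall_game d) 2 \<pi> P2 1 < dU (recall_game d) 2 \<pi> P2 0"
      using x \<open>d > 0\<close> by (simp add: dU_recall_game)
    then have "\<pi> 2 P2 1 = 0"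
      using kkt_dominated_unplayed[OF kkt(2), of P2 1 0] by (simp add: recall_infosets_def actsI_game)
    with pos show False by simp
  qed
  then show "\<pi> 2 P2 0 = 1" using p(1) by simp
qed

lemma cdt_eq_forgetful_game_unique:
  assumes "cdt_eq (forgetful_game d) \<pi>" "cdt_eq (forgetful_game d) \<pi>'" "d < 1/2"
  shows "real_equiv (forgetful_game d) \<pi> \<pi>'"
  using cdt_eq_forgetful_game[OF assms(1,3)] cdt_eq_forgetful_game[OF assms(2,3)]
  by (simp add: real_equiv_def game_nodes_def reach_explicit step_prob_def)

definition forgetful_equilibrium :: "nat profile" where
  "forgetful_equilibrium i I a = (if i = 2 then of_bool (a = 1) else of_bool (a = 0))"

definition recall_equilibrium :: "nat profile" where
  "recall_equilibrium i I a =
     (if i = 2 then of_bool (a = 0) else if I = Y1 then of_bool (a = 1) else of_bool (a = 0))"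

lemma nash_eq_forgetful_equilibrium:
  assumes "d < 1/2"
  shows "nash_eq (forgetful_game d) forgetful_equilibrium"
  unfolding nash_eq_def
proof (intro conjI ballI allI impI)
  show "profile (forgetful_game d) forgetful_equilibrium"
    by (simp add: profile_forgetful_game forgetful_equilibrium_def is_dist_def)
  fix i s assume i: "i \<in> players (forgetful_game d)" and s: "strat (forgetful_game d) i s"
  show "U (forgetful_game d) i (forgetful_equilibrium(i := s)) \<le> U (forgetful_game d) i forgetful_equilibrium"
  proof (cases "i = 1")
    case True
    then have "s X0 0 = 1" "s X1 0 = 1" "s Y 0 + s Y 1 = 1" "s Y 1 \<ge> 0"
      using s is_dist_singleton is_dist_pair[of 0 1 "s Y"]
      by (auto simp: strat_def forgetful_infosets_def actsI_game)
    then show ?thesis using True by (simp add: U_forgetful_game forgetful_equilibrium_def)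
  next
    case False
    then have "i = 2" using i by simp
    then have "s P2 0 + s P2 1 = 1" "s P2 0 \<ge> 0"
      using s is_dist_pair[of 0 1 "s P2"] by (auto simp: strat_def forgetful_infosets_def actsI_game)
    moreover have "s P2 0 * d \<le> s P2 0 * (1/2)"
      using calculation assms by (intro mult_left_mono) auto
    ultimately show ?thesis using \<open>i = 2\<close>
      by (simp add: U_forgetful_game forgetful_equilibrium_def algebra_simps)
  qed
qed

lemma nash_eq_recall_equilibrium:
  assumes "d > 0"
  shows "nash_eq (recall_game d) recall_equilibrium"
  unfolding nash_eq_def
proof (intro conjI ballI allI impI)
  show "profile (recall_game d) recall_equilibrium"
    by (simp add: profile_recall_game recall_equilibrium_def is_dist_def)
  fix i s assume i: "i \<in> players (recall_game d)" and s: "strat (recall_game d) i s"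
  show "U (recall_game d) i (recall_equilibrium(i := s)) \<le> U (recall_game d) i recall_equilibrium"
  proof (cases "i = 1")
    case True
    then have "s X0 0 = 1" "s X1 0 = 1"
      using s is_dist_singleton by (auto simp: strat_def recall_infosets_def actsI_game)
    then show ?thesis using True by (simp add: U_recall_game recall_equilibrium_def)
  next
    case False
    then have "i = 2" using i by simp
    then have "s P2 0 + s P2 1 = 1" "s P2 0 \<ge> 0" "s P2 1 \<ge> 0"
      using s is_dist_pair[of 0 1 "s P2"] by (auto simp: strat_def recall_infosets_def actsI_game)
    moreover have "d * s P2 0 \<le> d * 1"
      using calculation assms by (intro mult_left_mono) auto
    ultimately show ?thesis using \<open>i = 2\<close> by (simp add: U_recall_game recall_equilibrium_def)
  qed
qed

lemma equilibrium_imp_cdt_eq: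
  assumes "X \<in> {cdt_eq, edt_eq, nash_eq}" "X (game d Is) \<pi>"
    and "Is \<in> {forgetful_infosets, recall_infosets}"
  shows "cdt_eq (game d Is) \<pi>"
proof -
  have "edt_eq (game d Is) \<pi> \<Longrightarrow> cdt_eq (game d Is) \<pi>"
    using assms(3) affine_in_infoset_forgetful_game affine_in_infoset_recall_game
    by (auto intro: edt_imp_cdt)
  then show ?thesis using assms(1,2) nash_imp_edt by auto
qed

lemma equilibria_exist:
  assumes "X \<in> {cdt_eq, edt_eq, nash_eq}" and "0 < d" "d < 1/2"
  shows "X (forgetful_game d) forgetful_equilibrium" "X (recall_game d) recall_equilibrium"
  using assms nash_eq_forgetful_equilibrium nash_eq_recall_equilibrium nash_imp_edt
    equilibrium_imp_cdt_eq[of nash_eq] by auto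

lemma forgetful_game_equilibrium_values:
  assumes "X \<in> {cdt_eq, edt_eq, nash_eq}" "X (forgetful_game d) \<pi>" "d < 1/2"
  shows "U (forgetful_game d) 1 \<pi> = 1" "U (forgetful_game d) 2 \<pi> = 1/2"
  using cdt_eq_forgetful_game[OF equilibrium_imp_cdt_eq[OF assms(1,2)] assms(3)]
  by (simp_all add: U_forgetful_game)

lemma recall_game_equilibrium_values:
  assumes "X \<in> {cdt_eq, edt_eq, nash_eq}" "X (recall_game d) \<pi>" "d > 0"
  shows "U (recall_game d) 1 \<pi> = d" "U (recall_game d) 2 \<pi> = d"
  using cdt_eq_recall_game[OF equilibrium_imp_cdt_eq[OF assms(1,2)] assms(3)]
  by (simp_all add: U_recall_game)

theorem proposition2:
  fixes \<epsilon> :: real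
  assumes "\<epsilon> > 0"
  shows "\<exists>G :: nat efg. wf_efg G \<and> num_players G = 2 \<and>
     (\<exists>\<pi>. cdt_eq G \<pi> \<and> (\<forall>\<pi>'. cdt_eq G \<pi>' \<longrightarrow> real_equiv G \<pi> \<pi>')) \<and>
     (\<forall>\<pi> \<pi>' i. cdt_eq G \<pi> \<longrightarrow> cdt_eq (pr1 G) \<pi>' \<longrightarrow> i \<in> {1, 2} \<longrightarrow>
        U G i \<pi> > 0 \<and> U (pr1 G) i \<pi>' / U G i \<pi> \<le> \<epsilon>) \<and>
     (\<forall>X \<in> {cdt_eq, edt_eq, nash_eq}. VoR_worst X G \<le> \<epsilon> \<and> VoR_best X G \<le> \<epsilon>)"
proof -
  define d where "d = min \<epsilon> 1 / 4"
  have d: "0 < d" "d < 1/2" "2 * d \<le> \<epsilon>" using assms by (auto simp: d_def)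
  let ?G = "forgetful_game d"
  note pr1 = pr1_forgetful_game[of d]
  note exist = equilibria_exist[OF _ d(1,2), folded pr1]
  note values_G = forgetful_game_equilibrium_values[OF _ _ d(2)]
  note values_pr1 = recall_game_equilibrium_values[OF _ _ d(1), folded pr1]
  show ?thesis
  proof (intro exI[of _ ?G] conjI ballI allI impI)
    show "wf_efg ?G" using wf_game d by simp
    show "\<exists>\<pi>. cdt_eq ?G \<pi> \<and> (\<forall>\<pi>'. cdt_eq ?G \<pi>' \<longrightarrow> real_equiv ?G \<pi> \<pi>')"
      using exist(1)[of cdt_eq] cdt_eq_forgetful_game_unique d by blast
    fix \<pi> \<pi>' i assume eq: "cdt_eq ?G \<pi>" "cdt_eq (pr1 ?G) \<pi>'" and "i \<in> {1, 2::nat}"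
    then show "U ?G i \<pi> > 0" "U (pr1 ?G) i \<pi>' / U ?G i \<pi> \<le> \<epsilon>"
      using d by (auto simp: values_G[of cdt_eq, OF _ eq(1)] values_pr1[of cdt_eq, OF _ eq(2)])
  next
    fix X :: "nat efg \<Rightarrow> nat profile \<Rightarrow> bool" assume X: "X \<in> {cdt_eq, edt_eq, nash_eq}"
    from VoR_of_unique_values[of X ?G, OF values_G(1)[OF X] exist(1)[OF X]
        values_pr1(1)[OF X] exist(2)[OF X]]
    show "VoR_worst X ?G \<le> \<epsilon>" "VoR_best X ?G \<le> \<epsilon>" using d by simp_all
  qed simp
qed

end
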